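(* For $n=1,2,3,4$ the minimal norm of a linear interpolation projector on the unit ball satisfies $\theta_1(B_1)=1$, $\theta_2(B_2)=\frac53$, $\theta_3(B_3)=2$, $\theta_4(B_4)=\frac{11}5$, i.e. $\theta_n(B_n)=3-\frac4{n+1}$; moreover, for $n\le4$ an interpolation projector $P:C(B_n)\to\Pi_1(\mathbb R^n)$ with nodes in $B_n$ satisfies $\|P\|_{B_n}=\theta_n(B_n)$ only if its nodes are the vertices of a regular simplex inscribed into $B_n$.
   Context: $B_n$ is the closed unit Euclidean ball in $\mathbb R^n$. $C(B_n)$ is the space of continuous functions with sup norm; $\Pi_1(\mathbb R^n)$ the space of polynomials of degree $\le1$. For nodes $x^{(1)},\dots,x^{(n+1)}\in B_n$ forming a nondegenerate simplex, the interpolation projector $P$ maps $f$ to the unique $p\in\Pi_1(\mathbb R^n)$ with $p(x^{(j)})=f(x^{(j)})$; $\|P\|_{B_n}$ is its operator norm. $\theta_n(B_n)$ is the minimum of $\|P\|_{B_n}$ over all such projectors. A simplex is inscribed into $B_n$ if its vertices lie on the unit sphere. *)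

theory Defs
  imports "HOL-Analysis.Analysis"
begin

text \<open>Nodes of an interpolation projector on R^n are indexed by j = 0..n, with n = CARD('n).\<close>

definition unit_ball :: "(real^'n) set" where
  "unit_ball = cball 0 1"

definition poly1 :: "(real^'n \<Rightarrow> real) \<Rightarrow> bool" where
  "poly1 p \<longleftrightarrow> (\<exists>a c. \<forall>y. p y = a \<bullet> y + c)"

definition admissible_nodes :: "(nat \<Rightarrow> real^'n) \<Rightarrow> bool" where
  "admissible_nodes x \<longleftrightarrow>
     (\<forall>j\<le>CARD('n). x j \<in> unit_ball) \<and>
     inj_on x {..CARD('n)} \<and>
     \<not> affine_dependent (x ` {..CARD('n)})"

definition interp_proj :: "(nat \<Rightarrow> real^'n) \<Rightarrow> (real^'n \<Rightarrow> real) \<Rightarrow> (real^'n \<Rightarrow> real)" where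
  "interp_proj x f = (THE p. poly1 p \<and> (\<forall>j\<le>CARD('n). p (x j) = f (x j)))"

definition proj_norm :: "(nat \<Rightarrow> real^'n) \<Rightarrow> real" where
  "proj_norm x = Sup {\<bar>interp_proj x f y\<bar> | f y.
      continuous_on unit_ball f \<and> (\<forall>z\<in>unit_ball. \<bar>f z\<bar> \<le> 1) \<and> y \<in> unit_ball}"

definition theta :: "'n::finite itself \<Rightarrow> real" where
  "theta _ = Inf {proj_norm (x :: nat \<Rightarrow> real^'n) | x. admissible_nodes x}"

definition regular_inscribed :: "(nat \<Rightarrow> real^'n) \<Rightarrow> bool" where
  "regular_inscribed x \<longleftrightarrow>
     (\<forall>j\<le>CARD('n). norm (x j) = 1) \<and>
     (\<exists>d. \<forall>i\<le>CARD('n). \<forall>j\<le>CARD('n). i \<noteq> j \<longrightarrow> dist (x i) (x j) = d)"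

end

theory Submission
  imports Defs
begin

text \<open>
  Write the barycentric coordinates of the nodes as lambda_j(y) = a_j \<bullet> y + c_j, so that
  (P f)(y) = sum_j f(x_j) lambda_j(y) and sum_j c_j = 1; hence some c_j \<le> 1/(n+1).
  Testing P at y = -a_j/|a_j| on a continuous f that is -1 at x_j and 1 at the other nodes gives
  ||P|| \<ge> 1 - 2 c_j + 2 |a_j| \<ge> 3 - 4 c_j, because |a_j| \<ge> a_j \<bullet> x_j = 1 - c_j.
  Equality forces c_j = 1/(n+1), |x_j| = 1 and a_j parallel to x_j for every j, which makes the
  simplex regular and inscribed.
  Conversely, for the regular inscribed simplex ||P|| is the maximum over the ball of
  sum_j |1 + s_j| / (n+1) with s_j = n x_j \<bullet> y, where sum_j s_j = 0 and
  sum_j s_j^2 \<le> n (n+1). Splitting the indices according to the sign of 1 + s_j and applying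
  Cauchy-Schwarz on both parts bounds sum_j |1 + s_j| by 3n - 1, provided n \<le> 4.
\<close>

section \<open>Barycentric coordinates\<close>

text \<open>a j \<bullet> y + c j is the j-th barycentric coordinate of y: these affine functions are the
  Lagrange basis of Pi_1 at the nodes x.\<close>

definition barycentric_coords ::
    "(nat \<Rightarrow> real^'n) \<Rightarrow> (nat \<Rightarrow> real^'n) \<Rightarrow> (nat \<Rightarrow> real) \<Rightarrow> bool" where
  "barycentric_coords x a c \<longleftrightarrow>
     (\<forall>j\<le>CARD('n). \<forall>i\<le>CARD('n). a j \<bullet> x i + c j = (if i = j then 1 else 0))"

lemma barycentric_coordsD:
  "barycentric_coords x a c \<Longrightarrow> j \<le> CARD('n) \<Longrightarrow> i \<le> CARD('n) \<Longrightarrow>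
     a j \<bullet> x i + c j = (if i = j then 1 else 0)"
  for x :: "nat \<Rightarrow> real^'n"
  unfolding barycentric_coords_def by blast

lemma barycentric_coords_inj_on:
  fixes x :: "nat \<Rightarrow> real^'n"
  assumes "barycentric_coords x a c"
  shows "inj_on x {..CARD('n)}"
proof (rule inj_onI, rule ccontr)
  fix i j assume "i \<in> {..CARD('n)}" "j \<in> {..CARD('n)}" "x i = x j" "i \<noteq> j"
  then show False
    using barycentric_coordsD[OF assms, of i i] barycentric_coordsD[OF assms, of i j] by auto
qed

lemma barycentric_coords_affine_independent:
  fixes x :: "nat \<Rightarrow> real^'n"
  assumes bc: "barycentric_coords x a c"
  shows "\<not> affine_dependent (x ` {..CARD('n)})"
proof
  let ?S = "x ` {..CARD('n)}"
  assume "affine_dependent ?S"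
  then obtain u where u: "sum u ?S = 0" "(\<Sum>v\<in>?S. u v *\<^sub>R v) = 0" and "\<exists>v\<in>?S. u v \<noteq> 0"
    using affine_dependent_explicit_finite[of ?S] by auto
  then obtain j where j: "j \<le> CARD('n)" "u (x j) \<noteq> 0" by auto
  \<comment> \<open>Apply the j-th barycentric coordinate to the vanishing affine combination.\<close>
  have "0 = a j \<bullet> (\<Sum>v\<in>?S. u v *\<^sub>R v) + sum u ?S * c j"
    using u by simp
  also have "\<dots> = (\<Sum>v\<in>?S. u v * (a j \<bullet> v + c j))"
    by (simp add: inner_sum_right sum_distrib_right sum.distrib distrib_left)
  also have "\<dots> = (\<Sum>v\<in>?S. if v = x j then u v else 0)"
  proof (intro sum.cong refl)
    fix v assume "v \<in> ?S"
    then obtain i where i: "i \<le> CARD('n)" "v = x i" by auto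
    have "x i = x j \<longleftrightarrow> i = j"
      using inj_onD[OF barycentric_coords_inj_on[OF bc], of i j] i j by auto
    then show "u v * (a j \<bullet> v + c j) = (if v = x j then u v else 0)"
      using barycentric_coordsD[OF bc j(1) i(1)] i by auto
  qed
  also have "\<dots> = u (x j)"
    using j by simp
  finally show False
    using j by simp
qed

lemma barycentric_coords_affine_hull:
  fixes x :: "nat \<Rightarrow> real^'n"
  assumes "barycentric_coords x a c"
  shows "affine hull (x ` {..CARD('n)}) = UNIV"
proof (rule affine_independent_span_eq)
  show "\<not> affine_dependent (x ` {..CARD('n)})"
    by (rule barycentric_coords_affine_independent[OF assms])
  show "card (x ` {..CARD('n)}) = Suc DIM(real^'n)"
    using barycentric_coords_inj_on[OF assms] by (simp add: card_image)
qed

lemma affine_eq_0_if_eq_0_on_nodes: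
  fixes x :: "nat \<Rightarrow> real^'n"
  assumes "barycentric_coords x a c" and "\<forall>i\<le>CARD('n). b \<bullet> x i + d = 0"
  shows "b \<bullet> y + d = 0"
proof -
  have "x ` {..CARD('n)} \<subseteq> {z. b \<bullet> z = - d}"
    using assms(2) by (auto simp: algebra_simps)
  then have "affine hull (x ` {..CARD('n)}) \<subseteq> {z. b \<bullet> z = - d}"
    by (intro hull_minimal affine_hyperplane)
  then have "y \<in> {z. b \<bullet> z = - d}"
    using barycentric_coords_affine_hull[OF assms(1)] by auto
  then show ?thesis by simp
qed

lemma barycentric_coords_sum:
  fixes x :: "nat \<Rightarrow> real^'n"
  assumes bc: "barycentric_coords x a c"
  shows "(\<Sum>j\<le>CARD('n). a j \<bullet> y + c j) = 1"
proof -
  have "(\<Sum>j\<le>CARD('n). a j) \<bullet> x i + ((\<Sum>j\<le>CARD('n). c j) - 1) = 0" if "i \<le> CARD('n)" for i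
  proof -
    have "(\<Sum>j\<le>CARD('n). a j) \<bullet> x i + (\<Sum>j\<le>CARD('n). c j) = (\<Sum>j\<le>CARD('n). a j \<bullet> x i + c j)"
      by (simp add: inner_sum_left sum.distrib)
    also have "\<dots> = (\<Sum>j\<le>CARD('n). if i = j then 1 else 0)"
      using that by (intro sum.cong) (simp_all add: barycentric_coordsD[OF bc])
    also have "\<dots> = 1"
      using that by simp
    finally show ?thesis by simp
  qed
  then have "(\<Sum>j\<le>CARD('n). a j) \<bullet> y + ((\<Sum>j\<le>CARD('n). c j) - 1) = 0"
    using affine_eq_0_if_eq_0_on_nodes[OF bc] by blast
  then show ?thesis
    by (simp add: inner_sum_left sum.distrib)
qed

lemma biorthogonal_exists:
  fixes v :: "nat \<Rightarrow> 'a::euclidean_space"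
  assumes inj: "inj_on v I" and indep: "independent (v ` I)"
  shows "\<exists>b. \<forall>j\<in>I. \<forall>i\<in>I. b j \<bullet> v i = (if i = j then 1 else 0)"
proof -
  have "\<exists>b. \<forall>i\<in>I. b \<bullet> v i = (if i = j then 1 else 0)" if j: "j \<in> I" for j
  proof -
    obtain g :: "'a \<Rightarrow> real" where "linear g" and g: "\<And>u. u \<in> v ` I \<Longrightarrow> g u = (if u = v j then 1 else 0)"
      using linear_independent_extend[OF indep, of "\<lambda>u. if u = v j then 1 else 0"] by auto
    have "adjoint g 1 \<bullet> v i = (if i = j then 1 else 0)" if "i \<in> I" for i
    proof -
      have "adjoint g 1 \<bullet> v i = g (v i)"
        using adjoint_works[OF \<open>linear g\<close>, of "v i" 1] by (simp add: inner_commute)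
      then show ?thesis
        using g[of "v i"] that j inj_onD[OF inj, of i j] by auto
    qed
    then show ?thesis by blast
  qed
  then show ?thesis by (intro bchoice) blast
qed

lemma barycentric_coords_exists:
  fixes x :: "nat \<Rightarrow> real^'n"
  assumes inj: "inj_on x {..CARD('n)}" and indep: "\<not> affine_dependent (x ` {..CARD('n)})"
  shows "\<exists>a c. barycentric_coords x a c"
proof -
  let ?I = "{1..CARD('n)}"
  have "{..CARD('n)} = insert 0 ?I"
    by auto
  then have nodes: "x ` {..CARD('n)} = insert (x 0) (x ` ?I)"
    by simp
  have "x 0 \<notin> x ` ?I"
    using inj by (force simp: inj_on_def)
  then have "independent ((\<lambda>i. - x 0 + x i) ` ?I)"
    using indep nodes by (simp add: affine_dependent_iff_dependent image_image)
  moreover have "inj_on (\<lambda>i. - x 0 + x i) ?I"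
    using inj by (auto simp: inj_on_def)
  ultimately obtain b where b: "\<forall>j\<in>?I. \<forall>i\<in>?I. b j \<bullet> (- x 0 + x i) = (if i = j then 1 else 0)"
    using biorthogonal_exists by blast
  \<comment> \<open>The coordinates are b j \<bullet> (y - x 0) for j \<ge> 1, and 1 minus their sum for j = 0.\<close>
  define a where "a j = (if j = 0 then - (\<Sum>k\<in>?I. b k) else b j)" for j
  define c where "c j = (if j = 0 then 1 else 0) - a j \<bullet> x 0" for j
  have "a j \<bullet> x i + c j = (if i = j then 1 else 0)" if ji: "j \<le> CARD('n)" "i \<le> CARD('n)" for i j
  proof -
    have shift: "a j \<bullet> x i + c j = a j \<bullet> (- x 0 + x i) + (if j = 0 then 1 else 0)"
      by (simp add: c_def inner_add_right inner_diff_right)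
    consider "i = 0" | "i \<in> ?I" "j = 0" | "i \<in> ?I" "j \<in> ?I"
      using ji by (cases "i = 0"; cases "j = 0") (auto simp: Suc_le_eq)
    then show ?thesis
    proof cases
      case 1
      then show ?thesis using shift by simp
    next
      case 2
      have "(\<Sum>k\<in>?I. b k \<bullet> (- x 0 + x i)) = (\<Sum>k\<in>?I. if i = k then 1 else 0)"
        using b 2 by (intro sum.cong) auto
      then have "a j \<bullet> (- x 0 + x i) = - 1"
        using 2 by (simp add: a_def inner_sum_left)
      then show ?thesis using shift 2 by simp
    next
      case 3
      then show ?thesis using shift b by (simp add: a_def)
    qed
  qed
  then show ?thesis
    unfolding barycentric_coords_def by blast
qed

lemma interp_proj_eq:
  fixes x :: "nat \<Rightarrow> real^'n"
  assumes bc: "barycentric_coords x a c"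
  shows "interp_proj x f = (\<lambda>y. \<Sum>j\<le>CARD('n). f (x j) * (a j \<bullet> y + c j))"
  unfolding interp_proj_def
proof (rule the_equality)
  define a' where "a' = (\<Sum>j\<le>CARD('n). f (x j) *\<^sub>R a j)"
  define c' where "c' = (\<Sum>j\<le>CARD('n). f (x j) * c j)"
  let ?q = "\<lambda>y. \<Sum>j\<le>CARD('n). f (x j) * (a j \<bullet> y + c j)"
  have q: "?q y = a' \<bullet> y + c'" for y
    by (simp add: a'_def c'_def inner_sum_left sum.distrib algebra_simps)
  have q_nodes: "?q (x i) = f (x i)" if "i \<le> CARD('n)" for i
  proof -
    have "?q (x i) = (\<Sum>j\<le>CARD('n). if i = j then f (x j) else 0)"
      using that by (intro sum.cong) (simp_all add: barycentric_coordsD[OF bc])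
    then show ?thesis
      using that by simp
  qed
  show "poly1 ?q \<and> (\<forall>j\<le>CARD('n). ?q (x j) = f (x j))"
    unfolding poly1_def using q q_nodes by blast
  fix p assume p: "poly1 p \<and> (\<forall>j\<le>CARD('n). p (x j) = f (x j))"
  then obtain b d where pa: "\<And>y. p y = b \<bullet> y + d"
    unfolding poly1_def by blast
  have eq0: "(b - a') \<bullet> y + (d - c') = 0" for y
  proof (rule affine_eq_0_if_eq_0_on_nodes[OF bc], intro allI impI)
    fix i assume "i \<le> CARD('n)"
    then have "p (x i) = ?q (x i)"
      using p q_nodes by simp
    then show "(b - a') \<bullet> x i + (d - c') = 0"
      by (simp add: pa q inner_diff_left)
  qed
  have "p y = ?q y" for y
    unfolding pa q using eq0[of y] by (simp add: inner_diff_left algebra_simps)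
  then show "p = ?q" ..
qed

lemma abs_interp_proj_le:
  fixes x :: "nat \<Rightarrow> real^'n"
  assumes bc: "barycentric_coords x a c" and f: "\<forall>j\<le>CARD('n). \<bar>f (x j)\<bar> \<le> 1"
  shows "\<bar>interp_proj x f y\<bar> \<le> (\<Sum>j\<le>CARD('n). \<bar>a j \<bullet> y + c j\<bar>)"
proof -
  have "\<bar>interp_proj x f y\<bar> \<le> (\<Sum>j\<le>CARD('n). \<bar>f (x j) * (a j \<bullet> y + c j)\<bar>)"
    unfolding interp_proj_eq[OF bc] by (rule sum_abs)
  also have "\<dots> = (\<Sum>j\<le>CARD('n). \<bar>f (x j)\<bar> * \<bar>a j \<bullet> y + c j\<bar>)"
    by (simp add: abs_mult)
  also have "\<dots> \<le> (\<Sum>j\<le>CARD('n). \<bar>a j \<bullet> y + c j\<bar>)"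
    using f by (intro sum_mono) (simp add: mult_left_le_one_le)
  finally show ?thesis .
qed

lemma admissible_nodes_in_unit_ball:
  "admissible_nodes x \<Longrightarrow> j \<le> CARD('n) \<Longrightarrow> norm (x j) \<le> 1"
  for x :: "nat \<Rightarrow> real^'n"
  by (simp add: admissible_nodes_def unit_ball_def)

lemma admissible_nodes_barycentric_coords:
  fixes x :: "nat \<Rightarrow> real^'n"
  assumes "admissible_nodes x"
  obtains a c where "barycentric_coords x a c"
  using assms barycentric_coords_exists unfolding admissible_nodes_def by blast

lemma bdd_above_interp_proj_values:
  fixes x :: "nat \<Rightarrow> real^'n"
  assumes adm: "admissible_nodes x"
  shows "bdd_above {\<bar>interp_proj x f y\<bar> | f y.
      continuous_on unit_ball f \<and> (\<forall>z\<in>unit_ball. \<bar>f z\<bar> \<le> 1) \<and> y \<in> unit_ball}"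
proof -
  obtain a c where bc: "barycentric_coords x a c"
    using adm by (rule admissible_nodes_barycentric_coords)
  show ?thesis
  proof (rule bdd_aboveI[where M = "\<Sum>j\<le>CARD('n). norm (a j) + \<bar>c j\<bar>"], clarify)
    fix f :: "real^'n \<Rightarrow> real" and y :: "real^'n"
    assume f: "\<forall>z\<in>unit_ball. \<bar>f z\<bar> \<le> 1" and y: "y \<in> unit_ball"
    have "\<forall>j\<le>CARD('n). \<bar>f (x j)\<bar> \<le> 1"
      using f adm by (simp add: admissible_nodes_def)
    then have "\<bar>interp_proj x f y\<bar> \<le> (\<Sum>j\<le>CARD('n). \<bar>a j \<bullet> y + c j\<bar>)"
      by (rule abs_interp_proj_le[OF bc])
    also have "\<dots> \<le> (\<Sum>j\<le>CARD('n). norm (a j) + \<bar>c j\<bar>)"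
    proof (rule sum_mono)
      fix j
      have "\<bar>a j \<bullet> y\<bar> \<le> norm (a j) * norm y"
        by (rule Cauchy_Schwarz_ineq2)
      also have "\<dots> \<le> norm (a j)"
        using y by (simp add: unit_ball_def mult_left_le)
      finally show "\<bar>a j \<bullet> y + c j\<bar> \<le> norm (a j) + \<bar>c j\<bar>"
        by linarith
    qed
    finally show "\<bar>interp_proj x f y\<bar> \<le> (\<Sum>j\<le>CARD('n). norm (a j) + \<bar>c j\<bar>)" .
  qed
qed

lemma abs_interp_proj_le_proj_norm:
  fixes x :: "nat \<Rightarrow> real^'n"
  assumes "admissible_nodes x" "continuous_on unit_ball f" "\<forall>z\<in>unit_ball. \<bar>f z\<bar> \<le> 1"
    and "y \<in> unit_ball"
  shows "\<bar>interp_proj x f y\<bar> \<le> proj_norm x"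
  unfolding proj_norm_def
  by (rule cSup_upper[OF _ bdd_above_interp_proj_values[OF assms(1)]]) (use assms in blast)

lemma proj_norm_le:
  fixes x :: "nat \<Rightarrow> real^'n"
  assumes adm: "admissible_nodes x" and bc: "barycentric_coords x a c"
    and bound: "\<forall>y\<in>unit_ball. (\<Sum>j\<le>CARD('n). \<bar>a j \<bullet> y + c j\<bar>) \<le> T"
  shows "proj_norm x \<le> T"
proof -
  let ?V = "{\<bar>interp_proj x f y\<bar> | f y.
      continuous_on unit_ball f \<and> (\<forall>z\<in>unit_ball. \<bar>f z\<bar> \<le> 1) \<and> y \<in> unit_ball}"
  have "\<bar>interp_proj x (\<lambda>_. 0) 0\<bar> \<in> ?V"
    by (intro CollectI exI[of _ "\<lambda>_::real^'n. 0::real"] exI[of _ "0::real^'n"])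
      (simp add: unit_ball_def)
  then have ne: "?V \<noteq> {}"
    by blast
  have ub: "v \<le> T" if "v \<in> ?V" for v
  proof -
    obtain f y where v: "v = \<bar>interp_proj x f y\<bar>" and f: "\<forall>z\<in>unit_ball. \<bar>f z\<bar> \<le> 1"
      and y: "y \<in> unit_ball"
      using \<open>v \<in> ?V\<close> by blast
    have "\<forall>j\<le>CARD('n). \<bar>f (x j)\<bar> \<le> 1"
      using f adm by (simp add: admissible_nodes_def)
    then show ?thesis
      using abs_interp_proj_le[OF bc, of f y] bound y v by fastforce
  qed
  show ?thesis
    unfolding proj_norm_def by (rule cSup_least[OF ne ub])
qed

section \<open>The lower bound and its equality case\<close>

lemma barycentric_coords_offset_sum:
  fixes x :: "nat \<Rightarrow> real^'n"
  assumes "barycentric_coords x a c"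
  shows "(\<Sum>j\<le>CARD('n). c j) = 1"
  using barycentric_coords_sum[OF assms, of 0] by simp

lemma one_minus_offset_le_norm:
  fixes x :: "nat \<Rightarrow> real^'n"
  assumes bc: "barycentric_coords x a c" and j: "j \<le> CARD('n)"
  shows "1 - c j \<le> norm (a j) * norm (x j)"
proof -
  have "1 - c j = a j \<bullet> x j"
    using barycentric_coordsD[OF bc j j] by simp
  also have "\<dots> \<le> norm (a j) * norm (x j)"
    by (rule norm_cauchy_schwarz)
  finally show ?thesis .
qed

lemma separating_function_exists:
  fixes x :: "nat \<Rightarrow> 'a::metric_space"
  assumes inj: "inj_on x {..n}" and j: "j \<le> n"
  obtains f :: "'a \<Rightarrow> real" where "continuous_on UNIV f" "\<And>z. \<bar>f z\<bar> \<le> 1"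
    "\<And>i. i \<le> n \<Longrightarrow> f (x i) = (if i = j then -1 else 1)"
proof (cases "n = 0")
  case True
  then show ?thesis
    using j by (intro that[of "\<lambda>_. -1"]) auto
next
  case False
  define \<delta> where "\<delta> = Min ((\<lambda>i. dist (x i) (x j)) ` ({..n} - {j}))"
  have "{..n} - {j} \<noteq> {}"
    using False j by (cases "j = 0") auto
  moreover have "dist (x i) (x j) > 0" if "i \<in> {..n} - {j}" for i
    using that j inj_onD[OF inj, of i j] by auto
  ultimately have \<delta>_pos: "\<delta> > 0"
    unfolding \<delta>_def by (subst Min_gr_iff) auto
  have \<delta>_le: "\<delta> \<le> dist (x i) (x j)" if "i \<le> n" "i \<noteq> j" for i
    unfolding \<delta>_def using that by (intro Min_le) auto
  define f where "f z = max (-1) (min 1 (2 / \<delta> * dist z (x j) - 1))" for z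
  show ?thesis
  proof (rule that)
    show "continuous_on UNIV f"
      unfolding f_def by (intro continuous_intros)
    show "\<bar>f z\<bar> \<le> 1" for z
      by (simp add: f_def abs_le_iff)
    show "f (x i) = (if i = j then -1 else 1)" if "i \<le> n" for i
    proof (cases "i = j")
      case False
      have "2 \<le> 2 / \<delta> * dist (x i) (x j)"
        using \<delta>_le[OF that False] \<delta>_pos by (simp add: field_simps)
      then show ?thesis
        using False by (simp add: f_def)
    qed (simp add: f_def)
  qed
qed

lemma barycentric_coords_nonzero:
  fixes x :: "nat \<Rightarrow> real^'n"
  assumes bc: "barycentric_coords x a c" and j: "j \<le> CARD('n)"
  shows "a j \<noteq> 0"
proof
  assume "a j = 0"
  define i where "i = (if j = 0 then 1 else 0::nat)"
  have "i \<le> CARD('n)" "i \<noteq> j"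
    using j by (auto simp: i_def)
  then show False
    using barycentric_coordsD[OF bc j j] barycentric_coordsD[OF bc j] \<open>a j = 0\<close> by force
qed

lemma proj_norm_ge_test_function:
  fixes x :: "nat \<Rightarrow> real^'n"
  assumes adm: "admissible_nodes x" and bc: "barycentric_coords x a c" and j: "j \<le> CARD('n)"
  shows "1 - 2 * c j + 2 * norm (a j) \<le> proj_norm x"
proof -
  obtain f :: "real^'n \<Rightarrow> real" where f: "continuous_on UNIV f" "\<And>z. \<bar>f z\<bar> \<le> 1"
    and f_nodes: "\<And>i. i \<le> CARD('n) \<Longrightarrow> f (x i) = (if i = j then -1 else 1)"
    using separating_function_exists[OF barycentric_coords_inj_on[OF bc] j] by blast
  \<comment> \<open>P f is 1 minus twice the j-th barycentric coordinate; evaluate it where that is least.\<close>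
  define y where "y = - (1 / norm (a j)) *\<^sub>R a j"
  have y: "y \<in> unit_ball"
    using barycentric_coords_nonzero[OF bc j] by (simp add: y_def unit_ball_def)
  have "interp_proj x f y = (\<Sum>i\<le>CARD('n). (a i \<bullet> y + c i) - (if i = j then 2 * (a i \<bullet> y + c i) else 0))"
    unfolding interp_proj_eq[OF bc] by (intro sum.cong refl) (simp add: f_nodes)
  also have "\<dots> = 1 - 2 * (a j \<bullet> y + c j)"
    using j by (simp add: sum_subtractf barycentric_coords_sum[OF bc])
  also have "\<dots> = 1 - 2 * c j + 2 * norm (a j)"
    using barycentric_coords_nonzero[OF bc j] by (simp add: y_def dot_square_norm power2_eq_square)
  finally have "interp_proj x f y = 1 - 2 * c j + 2 * norm (a j)" .
  moreover have "\<bar>interp_proj x f y\<bar> \<le> proj_norm x"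
    using f(2) by (intro abs_interp_proj_le_proj_norm[OF adm continuous_on_subset[OF f(1)] _ y]) auto
  ultimately show ?thesis
    by linarith
qed

lemma proj_norm_ge_offset:
  fixes x :: "nat \<Rightarrow> real^'n"
  assumes adm: "admissible_nodes x" and bc: "barycentric_coords x a c" and j: "j \<le> CARD('n)"
  shows "3 - 4 * c j \<le> proj_norm x"
proof -
  have "norm (a j) * norm (x j) \<le> norm (a j)"
    using admissible_nodes_in_unit_ball[OF adm j] by (simp add: mult_left_le)
  then show ?thesis
    using proj_norm_ge_test_function[OF adm bc j] one_minus_offset_le_norm[OF bc j] by linarith
qed

lemma proj_norm_lower_bound:
  fixes x :: "nat \<Rightarrow> real^'n"
  assumes adm: "admissible_nodes x"
  shows "3 - 4 / (real CARD('n) + 1) \<le> proj_norm x"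
proof -
  obtain a c where bc: "barycentric_coords x a c"
    using adm by (rule admissible_nodes_barycentric_coords)
  have "\<exists>j\<le>CARD('n). c j \<le> 1 / (real CARD('n) + 1)"
  proof (rule ccontr)
    assume "\<not> ?thesis"
    then have "(\<Sum>j\<le>CARD('n). 1 / (real CARD('n) + 1)) < (\<Sum>j\<le>CARD('n). c j)"
      by (intro sum_strict_mono) auto
    then show False
      using barycentric_coords_offset_sum[OF bc] by simp
  qed
  then obtain j where "j \<le> CARD('n)" "c j \<le> 1 / (real CARD('n) + 1)"
    by blast
  then show ?thesis
    using proj_norm_ge_offset[OF adm bc] by fastforce
qed

lemma regular_inscribed_if_inner_eq:
  fixes x :: "nat \<Rightarrow> real^'n"
  assumes "\<forall>j\<le>CARD('n). norm (x j) = 1"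
    and "\<forall>i\<le>CARD('n). \<forall>j\<le>CARD('n). i \<noteq> j \<longrightarrow> x i \<bullet> x j = t"
  shows "regular_inscribed x"
proof -
  have "dist (x i) (x j) = sqrt (2 - 2 * t)" if "i \<le> CARD('n)" "j \<le> CARD('n)" "i \<noteq> j" for i j
  proof -
    have "(dist (x i) (x j))\<^sup>2 = x i \<bullet> x i + x j \<bullet> x j - 2 * (x i \<bullet> x j)"
      by (simp add: dist_norm power2_norm_eq_inner inner_diff_left inner_diff_right inner_commute)
    also have "\<dots> = 2 - 2 * t"
      using assms that by (simp add: dot_square_norm)
    finally show ?thesis
      by (simp add: real_sqrt_unique)
  qed
  then show ?thesis
    unfolding regular_inscribed_def using assms(1) by blast
qed

lemma minimal_proj_norm_imp_regular_inscribed: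
  fixes x :: "nat \<Rightarrow> real^'n"
  assumes adm: "admissible_nodes x" and le: "proj_norm x \<le> 3 - 4 / (real CARD('n) + 1)"
  shows "regular_inscribed x"
proof -
  let ?n = "real CARD('n)"
  define r where "r = ?n / (?n + 1)"
  have r_pos: "r > 0"
    by (simp add: r_def)
  obtain a c where bc: "barycentric_coords x a c"
    using adm by (rule admissible_nodes_barycentric_coords)
  have "\<forall>j\<in>{..CARD('n)}. c j - 1 / (?n + 1) = 0"
  proof (subst sum_nonneg_eq_0_iff[symmetric])
    show "c j - 1 / (?n + 1) \<ge> 0" if "j \<in> {..CARD('n)}" for j
      using proj_norm_ge_offset[OF adm bc] that le by fastforce
    show "(\<Sum>j\<le>CARD('n). c j - 1 / (?n + 1)) = 0"
      using barycentric_coords_offset_sum[OF bc] by (simp add: sum_subtractf)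
  qed simp
  then have c: "c j = 1 / (?n + 1)" if "j \<le> CARD('n)" for j
    using that by simp
  \<comment> \<open>Equality must then hold in every estimate behind proj_norm_ge_offset.\<close>
  have a_norm: "norm (a j) = r" and x_norm: "norm (x j) = 1" if j: "j \<le> CARD('n)" for j
  proof -
    have "1 - c j = r"
      using c[OF j] by (simp add: r_def field_simps)
    moreover have "norm (a j) * norm (x j) \<le> norm (a j)"
      using admissible_nodes_in_unit_ball[OF adm j] by (simp add: mult_left_le)
    moreover have "3 - 4 / (?n + 1) = 3 - 4 * c j"
      using c[OF j] by simp
    ultimately show a_norm: "norm (a j) = r"
      using proj_norm_ge_test_function[OF adm bc j] one_minus_offset_le_norm[OF bc j] le by linarith
    have "r \<le> r * norm (x j)"
      using one_minus_offset_le_norm[OF bc j] a_norm \<open>1 - c j = r\<close> by simp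
    then show "norm (x j) = 1"
      using admissible_nodes_in_unit_ball[OF adm j] r_pos by simp
  qed
  have a: "a j = r *\<^sub>R x j" if j: "j \<le> CARD('n)" for j
  proof -
    have "a j \<bullet> x j = r"
      using barycentric_coordsD[OF bc j j] c[OF j] by (simp add: r_def field_simps)
    have "(a j - r *\<^sub>R x j) \<bullet> (a j - r *\<^sub>R x j)
        = a j \<bullet> a j - 2 * r * (a j \<bullet> x j) + r * r * (x j \<bullet> x j)"
      by (simp add: inner_diff_left inner_diff_right inner_commute algebra_simps)
    also have "\<dots> = 0"
      using \<open>a j \<bullet> x j = r\<close> a_norm[OF j] x_norm[OF j]
      by (simp add: power2_norm_eq_inner[symmetric] power2_eq_square)
    finally show ?thesis
      by simp
  qed
  have "x i \<bullet> x j = - 1 / ?n" if "i \<le> CARD('n)" "j \<le> CARD('n)" "i \<noteq> j" for i j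
  proof -
    have "r * (x i \<bullet> x j) + 1 / (?n + 1) = 0"
      using barycentric_coordsD[OF bc that(1,2)] a[OF that(1)] c[OF that(1)] that(3) by simp
    then show ?thesis
      by (simp add: r_def field_simps)
  qed
  then show ?thesis
    using x_norm by (intro regular_inscribed_if_inner_eq) auto
qed

section \<open>An inequality valid in dimension at most four\<close>

lemma sum_abs_one_plus_eq:
  fixes s :: "'a \<Rightarrow> real"
  assumes "finite I" and "(\<Sum>j\<in>I. s j) = 0"
  shows "(\<Sum>j\<in>I. \<bar>1 + s j\<bar>)
    = real (card I) - 2 * real (card {j\<in>I. s j < -1}) - 2 * (\<Sum>j\<in>{j\<in>I. s j < -1}. s j)"
proof -
  have "(\<Sum>j\<in>I. \<bar>1 + s j\<bar>) = (\<Sum>j\<in>I. (1 + s j) + (if s j < -1 then - 2 - 2 * s j else 0))"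
    by (intro sum.cong) auto
  also have "\<dots> = real (card I) + (\<Sum>j\<in>{j\<in>I. s j < -1}. - 2 - 2 * s j)"
    using assms by (simp add: sum.distrib sum.inter_filter)
  finally show ?thesis
    by (simp add: sum_subtractf sum_distrib_left[symmetric])
qed

lemma zero_sum_square_sum_le:
  fixes s :: "'a \<Rightarrow> real"
  assumes fin: "finite I" and N: "N \<subseteq> I" and zero: "(\<Sum>j\<in>I. s j) = 0"
  shows "real (card I) * (\<Sum>j\<in>N. s j)\<^sup>2 \<le> real (card N) * real (card (I - N)) * (\<Sum>j\<in>I. (s j)\<^sup>2)"
proof -
  define A where "A = (\<Sum>j\<in>I - N. s j)"
  have split: "(\<Sum>j\<in>I. g j) = (\<Sum>j\<in>N. g j) + (\<Sum>j\<in>I - N. g j)" for g :: "'a \<Rightarrow> real"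
    using sum.subset_diff[OF N fin] by (simp add: add.commute)
  have "(\<Sum>j\<in>N. s j) = - A"
    using split[of s] zero by (simp add: A_def)
  then have "A\<^sup>2 \<le> (\<Sum>j\<in>N. (s j)\<^sup>2) * real (card N)" "A\<^sup>2 \<le> (\<Sum>j\<in>I - N. (s j)\<^sup>2) * real (card (I - N))"
    using sum_squared_le_sum_of_squares[of s N] sum_squared_le_sum_of_squares[of s "I - N"]
    by (simp_all add: A_def)
  then have "real (card (I - N)) * A\<^sup>2 \<le> real (card (I - N)) * ((\<Sum>j\<in>N. (s j)\<^sup>2) * real (card N))"
    "real (card N) * A\<^sup>2 \<le> real (card N) * ((\<Sum>j\<in>I - N. (s j)\<^sup>2) * real (card (I - N)))"
    by (simp_all add: mult_left_mono)
  then have "real (card (I - N)) * A\<^sup>2 + real (card N) * A\<^sup>2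
      \<le> real (card N) * real (card (I - N)) * ((\<Sum>j\<in>N. (s j)\<^sup>2) + (\<Sum>j\<in>I - N. (s j)\<^sup>2))"
    by (simp add: algebra_simps)
  moreover have "real (card I) = real (card N) + real (card (I - N))"
    using card_Diff_subset[OF finite_subset[OF N fin] N] card_mono[OF fin N] by simp
  ultimately show ?thesis
    using split[of "\<lambda>j. (s j)\<^sup>2"] \<open>(\<Sum>j\<in>N. s j) = - A\<close> by (simp add: algebra_simps)
qed

lemma small_dimension_count_ineq:
  fixes n k :: nat
  assumes "1 \<le> n" "n \<le> 4" "k \<le> n + 1"
  shows "real n * real k * real (n + 1 - k) \<le> (real n + real k - 1)\<^sup>2"
proof -
  \<comment> \<open>This fails for n = 5, k = 2: here the hypothesis n \<le> 4 of the theorem is used.\<close>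
  have "n = 1 \<or> n = 2 \<or> n = 3 \<or> n = 4" "k = 0 \<or> k = 1 \<or> k = 2 \<or> k = 3 \<or> k = 4 \<or> k = 5"
    using assms by auto
  then have "n * k * (n + 1 - k) \<le> (n + k - 1)\<^sup>2"
    using assms(3) by (elim disjE) (simp_all add: power2_eq_square)
  then have "real (n * k * (n + 1 - k)) \<le> real ((n + k - 1)\<^sup>2)"
    by (simp only: of_nat_le_iff)
  then show ?thesis
    using assms(1) by (simp add: of_nat_diff)
qed

lemma sum_abs_one_plus_le:
  fixes s :: "'a \<Rightarrow> real"
  assumes fin: "finite I" and card: "card I = n + 1" and n: "1 \<le> n" "n \<le> 4"
    and zero: "(\<Sum>j\<in>I. s j) = 0" and squares: "(\<Sum>j\<in>I. (s j)\<^sup>2) \<le> real n * (real n + 1)"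
  shows "(\<Sum>j\<in>I. \<bar>1 + s j\<bar>) \<le> 3 * real n - 1"
proof -
  define N where "N = {j\<in>I. s j < -1}"
  define A where "A = - (\<Sum>j\<in>N. s j)"
  have N: "N \<subseteq> I" "finite N"
    using fin by (auto simp: N_def)
  have k: "card N \<le> n + 1" "card (I - N) = n + 1 - card N"
    using card card_mono[OF fin N(1)] card_Diff_subset[OF N(2,1)] by auto
  have "(real n + 1) * A\<^sup>2 \<le> real (card N) * real (card (I - N)) * (\<Sum>j\<in>I. (s j)\<^sup>2)"
    using zero_sum_square_sum_le[OF fin N(1) zero] card by (simp add: A_def add.commute)
  also have "\<dots> \<le> real (card N) * real (card (I - N)) * (real n * (real n + 1))"
    using squares by (intro mult_left_mono) auto
  finally have "(real n + 1) * A\<^sup>2 \<le> (real n + 1) * (real n * real (card N) * real (card (I - N)))"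
    by (simp add: algebra_simps)
  then have "A\<^sup>2 \<le> real n * real (card N) * real (n + 1 - card N)"
    using k(2) by (simp add: mult_le_cancel_left_pos)
  also have "\<dots> \<le> (real n + real (card N) - 1)\<^sup>2"
    using small_dimension_count_ineq[OF n k(1)] .
  finally have "A \<le> real n + real (card N) - 1"
    by (rule power2_le_imp_le) (use n in simp)
  then show ?thesis
    using sum_abs_one_plus_eq[OF fin zero] card by (simp add: N_def[symmetric] A_def)
qed

section \<open>The regular simplex\<close>

lemma sum_atMost_eq_0_plus:
  fixes F :: "nat \<Rightarrow> 'a::comm_monoid_add"
  shows "(\<Sum>j\<le>n. F j) = F 0 + (\<Sum>j=1..n. F j)"
  by (simp add: atMost_atLeast0 sum.atLeast_Suc_atMost)

locale regular_simplex_frame =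
  fixes h :: "nat \<Rightarrow> 'n::finite" and \<alpha> \<beta> \<gamma> :: real
  assumes coords: "bij_betw h {1..CARD('n)} UNIV"
    and alpha: "\<alpha>\<^sup>2 = (real CARD('n) + 1) / real CARD('n)"
    and gamma: "real CARD('n) * \<gamma>\<^sup>2 = 1"
    and centroid: "\<gamma> + \<alpha> + real CARD('n) * \<beta> = 0"
begin

definition vertex :: "nat \<Rightarrow> real^'n" where
  "vertex j = (if j = 0 then (\<chi> l. \<gamma>) else (\<chi> l. (if l = h j then \<alpha> else 0) + \<beta>))"

lemma vertex_nth: "vertex j $ l = (if j = 0 then \<gamma> else (if l = h j then \<alpha> else 0) + \<beta>)"
  by (simp add: vertex_def)

lemma sum_coords_reindex: "(\<Sum>j=1..CARD('n). g (h j)) = (\<Sum>l\<in>UNIV. g l)"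
  using sum.reindex_bij_betw[OF coords] .

lemma inner_vertex_0: "vertex 0 \<bullet> y = \<gamma> * (\<Sum>l\<in>UNIV. y $ l)"
  by (simp add: vertex_def inner_vec_def sum_distrib_left)

lemma inner_vertex:
  assumes "j \<noteq> 0"
  shows "vertex j \<bullet> y = \<alpha> * y $ h j + \<beta> * (\<Sum>l\<in>UNIV. y $ l)"
proof -
  have "vertex j \<bullet> y = (\<Sum>l\<in>UNIV. (if l = h j then \<alpha> * y $ l else 0) + \<beta> * y $ l)"
    using assms by (auto simp: vertex_def inner_vec_def distrib_right intro!: sum.cong)
  then show ?thesis
    by (simp add: sum.distrib sum_distrib_left)
qed

lemma sum_vertex_coords: "(\<Sum>l\<in>UNIV. vertex j $ l) = (if j = 0 then real CARD('n) * \<gamma> else - \<gamma>)"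
  using centroid by (simp add: vertex_def sum.distrib)

lemma gamma_sq: "\<gamma>\<^sup>2 = 1 / real CARD('n)"
  using gamma by (simp add: field_simps)

lemma alpha_sq: "\<alpha>\<^sup>2 = 1 + 1 / real CARD('n)"
  using alpha by (simp add: field_simps)

lemma cross_term: "2 * \<alpha> * \<beta> + real CARD('n) * \<beta>\<^sup>2 = - 1 / real CARD('n)"
proof -
  let ?n = "real CARD('n)"
  have "?n * (2 * \<alpha> * \<beta> + ?n * \<beta>\<^sup>2) = (\<gamma> + \<alpha> + ?n * \<beta>) * (?n * \<beta> + \<alpha> - \<gamma>) + \<gamma>\<^sup>2 - \<alpha>\<^sup>2"
    by (simp add: algebra_simps power2_eq_square)
  also have "\<dots> = - 1"
    using centroid alpha_sq gamma_sq by simp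
  finally show ?thesis
    by (simp add: field_simps)
qed

lemma vertex_0_inner_vertex:
  assumes "j \<noteq> 0"
  shows "vertex 0 \<bullet> vertex j = - 1 / real CARD('n)"
proof -
  have "vertex 0 \<bullet> vertex j = - \<gamma>\<^sup>2"
    using assms by (simp add: inner_vertex_0 sum_vertex_coords power2_eq_square)
  then show ?thesis
    by (simp add: gamma_sq)
qed

lemma vertex_inner_vertex:
  assumes "j \<le> CARD('n)" "i \<le> CARD('n)"
  shows "vertex j \<bullet> vertex i = (if i = j then 1 else - 1 / real CARD('n))"
proof -
  consider "j = 0" "i = 0" | "j = 0" "i \<noteq> 0" | "j \<noteq> 0" "i = 0" | "j \<noteq> 0" "i \<noteq> 0"
    by blast
  then show ?thesis
  proof cases
    case 1
    have "vertex j \<bullet> vertex i = real CARD('n) * \<gamma>\<^sup>2"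
      using 1 by (simp add: inner_vertex_0 sum_vertex_coords power2_eq_square)
    then show ?thesis
      using 1 gamma by simp
  next
    case 2
    then show ?thesis
      by (simp add: vertex_0_inner_vertex)
  next
    case 3
    then show ?thesis
      using vertex_0_inner_vertex[of j] by (simp add: inner_commute)
  next
    case 4
    have "h j = h i \<longleftrightarrow> i = j"
      using 4 assms inj_onD[OF bij_betw_imp_inj_on[OF coords], of j i] by auto
    then have "vertex j \<bullet> vertex i = \<alpha> * ((if i = j then \<alpha> else 0) + \<beta>) + \<beta> * (- \<gamma>)"
      using 4 by (simp add: inner_vertex sum_vertex_coords, simp add: vertex_nth)
    also have "- \<gamma> = \<alpha> + real CARD('n) * \<beta>"
      using centroid by linarith
    also have "\<alpha> * ((if i = j then \<alpha> else 0) + \<beta>) + \<beta> * (\<alpha> + real CARD('n) * \<beta>)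
        = (if i = j then \<alpha>\<^sup>2 else 0) + (2 * \<alpha> * \<beta> + real CARD('n) * \<beta>\<^sup>2)"
      by (cases "i = j") (simp_all add: power2_eq_square algebra_simps)
    finally show ?thesis
      by (simp add: cross_term alpha_sq)
  qed
qed

lemma sum_inner_vertex: "(\<Sum>j\<le>CARD('n). vertex j \<bullet> y) = 0"
proof -
  define S where "S = (\<Sum>l\<in>UNIV. y $ l)"
  have "(\<Sum>j=1..CARD('n). vertex j \<bullet> y) = (\<Sum>j=1..CARD('n). \<alpha> * y $ h j + \<beta> * S)"
    by (intro sum.cong) (auto simp: inner_vertex S_def)
  also have "\<dots> = \<alpha> * S + real CARD('n) * \<beta> * S"
    unfolding sum.distrib sum_distrib_left[symmetric] sum_coords_reindex[of "\<lambda>l. y $ l"]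
    by (simp add: S_def)
  finally have "(\<Sum>j\<le>CARD('n). vertex j \<bullet> y) = (\<gamma> + \<alpha> + real CARD('n) * \<beta>) * S"
    unfolding sum_atMost_eq_0_plus inner_vertex_0 S_def[symmetric] by (simp add: algebra_simps)
  then show ?thesis
    using centroid by simp
qed

lemma sum_inner_vertex_squared:
  "(\<Sum>j\<le>CARD('n). (vertex j \<bullet> y)\<^sup>2) = (real CARD('n) + 1) / real CARD('n) * (y \<bullet> y)"
proof -
  define S where "S = (\<Sum>l\<in>UNIV. y $ l)"
  have "(\<Sum>j=1..CARD('n). (vertex j \<bullet> y)\<^sup>2)
      = (\<Sum>j=1..CARD('n). \<alpha>\<^sup>2 * (y $ h j)\<^sup>2 + 2 * \<alpha> * \<beta> * S * y $ h j + \<beta>\<^sup>2 * S\<^sup>2)"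
    by (intro sum.cong) (auto simp: inner_vertex S_def power2_eq_square algebra_simps)
  also have "\<dots> = \<alpha>\<^sup>2 * (y \<bullet> y) + 2 * \<alpha> * \<beta> * S * S + real CARD('n) * \<beta>\<^sup>2 * S\<^sup>2"
    unfolding sum.distrib sum_distrib_left[symmetric] sum_coords_reindex[of "\<lambda>l. y $ l"]
      sum_coords_reindex[of "\<lambda>l. (y $ l)\<^sup>2"]
    by (simp add: S_def inner_vec_def power2_eq_square)
  finally have "(\<Sum>j\<le>CARD('n). (vertex j \<bullet> y)\<^sup>2)
      = \<alpha>\<^sup>2 * (y \<bullet> y) + S\<^sup>2 * (\<gamma>\<^sup>2 + (2 * \<alpha> * \<beta> + real CARD('n) * \<beta>\<^sup>2))"
    unfolding sum_atMost_eq_0_plus inner_vertex_0 S_def[symmetric]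
    by (simp add: power2_eq_square algebra_simps)
  also have "\<gamma>\<^sup>2 + (2 * \<alpha> * \<beta> + real CARD('n) * \<beta>\<^sup>2) = 0"
    by (simp add: cross_term gamma_sq)
  finally show ?thesis
    by (simp add: alpha)
qed

lemma barycentric_coords_vertex:
  "barycentric_coords vertex (\<lambda>j. (real CARD('n) / (real CARD('n) + 1)) *\<^sub>R vertex j)
     (\<lambda>_. 1 / (real CARD('n) + 1))"
  unfolding barycentric_coords_def by (auto simp: vertex_inner_vertex field_simps)

lemma admissible_nodes_vertex: "admissible_nodes vertex"
proof -
  have "norm (vertex j) = 1" if "j \<le> CARD('n)" for j
    using vertex_inner_vertex[OF that that] by (simp add: norm_eq_sqrt_inner)
  then show ?thesis
    unfolding admissible_nodes_def unit_ball_def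
    using barycentric_coords_inj_on[OF barycentric_coords_vertex]
      barycentric_coords_affine_independent[OF barycentric_coords_vertex]
    by simp
qed

lemma proj_norm_vertex_le:
  assumes "CARD('n) \<le> 4"
  shows "proj_norm vertex \<le> 3 - 4 / (real CARD('n) + 1)"
proof (rule proj_norm_le[OF admissible_nodes_vertex barycentric_coords_vertex], intro ballI)
  let ?n = "real CARD('n)"
  fix y :: "real^'n"
  assume "y \<in> unit_ball"
  have "\<bar>(?n / (?n + 1)) *\<^sub>R vertex j \<bullet> y + 1 / (?n + 1)\<bar> = \<bar>1 + ?n * (vertex j \<bullet> y)\<bar> / (?n + 1)"
    for j
  proof -
    have "(?n / (?n + 1)) *\<^sub>R vertex j \<bullet> y + 1 / (?n + 1) = (1 + ?n * (vertex j \<bullet> y)) / (?n + 1)"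
      by (simp add: field_simps)
    then show ?thesis
      by simp
  qed
  then have "(\<Sum>j\<le>CARD('n). \<bar>(?n / (?n + 1)) *\<^sub>R vertex j \<bullet> y + 1 / (?n + 1)\<bar>)
      = (\<Sum>j\<le>CARD('n). \<bar>1 + ?n * (vertex j \<bullet> y)\<bar>) / (?n + 1)"
    by (simp add: sum_divide_distrib)
  also have "\<dots> \<le> (3 * ?n - 1) / (?n + 1)"
  proof (rule divide_right_mono[OF sum_abs_one_plus_le])
    show "(\<Sum>j\<le>CARD('n). ?n * (vertex j \<bullet> y)) = 0"
      by (simp add: sum_distrib_left[symmetric] sum_inner_vertex)
    have "y \<bullet> y \<le> 1"
      using \<open>y \<in> unit_ball\<close> by (simp add: unit_ball_def dot_square_norm power_le_one)
    have "(\<Sum>j\<le>CARD('n). (?n * (vertex j \<bullet> y))\<^sup>2) = ?n\<^sup>2 * (\<Sum>j\<le>CARD('n). (vertex j \<bullet> y)\<^sup>2)"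
      by (simp add: power_mult_distrib sum_distrib_left)
    also have "\<dots> = ?n * (?n + 1) * (y \<bullet> y)"
      unfolding sum_inner_vertex_squared by (simp add: power2_eq_square)
    also have "\<dots> \<le> ?n * (?n + 1)"
      using \<open>y \<bullet> y \<le> 1\<close> by (simp add: mult_left_le)
    finally show "(\<Sum>j\<le>CARD('n). (?n * (vertex j \<bullet> y))\<^sup>2) \<le> ?n * (?n + 1)" .
  qed (use assms in auto)
  also have "\<dots> = 3 - 4 / (?n + 1)"
    by (simp add: field_simps)
  finally show "(\<Sum>j\<le>CARD('n). \<bar>(?n / (?n + 1)) *\<^sub>R vertex j \<bullet> y + 1 / (?n + 1)\<bar>) \<le> 3 - 4 / (?n + 1)" .
qed

end

lemma regular_simplex_frame_exists: "\<exists>(h :: nat \<Rightarrow> 'n::finite) \<alpha> \<beta> \<gamma>. regular_simplex_frame h \<alpha> \<beta> \<gamma>"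
proof -
  let ?n = "real CARD('n)"
  obtain h :: "nat \<Rightarrow> 'n" where h: "bij_betw h {1..CARD('n)} UNIV"
    using ex_bij_betw_nat_finite_1[of "UNIV :: 'n set"] by auto
  define \<alpha> where "\<alpha> = sqrt ((?n + 1) / ?n)"
  define \<gamma> where "\<gamma> = - 1 / sqrt ?n"
  define \<beta> where "\<beta> = - (\<alpha> + \<gamma>) / ?n"
  have "regular_simplex_frame h \<alpha> \<beta> \<gamma>"
    by unfold_locales (use h in \<open>simp_all add: \<alpha>_def \<gamma>_def \<beta>_def power_divide\<close>)
  then show ?thesis
    by blast
qed

theorem mainTheorem14:
  assumes "CARD('n::finite) \<le> 4"
  shows "theta TYPE('n) = 3 - 4 / (real (CARD('n)) + 1) \<and>
         (\<forall>x :: nat \<Rightarrow> real^'n. admissible_nodes x \<and> proj_norm x = theta TYPE('n)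
             \<longrightarrow> regular_inscribed x)"
proof -
  let ?T = "3 - 4 / (real (CARD('n)) + 1)"
  obtain h :: "nat \<Rightarrow> 'n" and \<alpha> \<beta> \<gamma> where frame: "regular_simplex_frame h \<alpha> \<beta> \<gamma>"
    using regular_simplex_frame_exists by blast
  let ?x = "regular_simplex_frame.vertex h \<alpha> \<beta> \<gamma>"
  have adm: "admissible_nodes ?x"
    using frame by (rule regular_simplex_frame.admissible_nodes_vertex)
  then have "proj_norm ?x = ?T"
    using regular_simplex_frame.proj_norm_vertex_le[OF frame assms] proj_norm_lower_bound[OF adm]
    by linarith
  then have "?T \<in> {proj_norm x | x :: nat \<Rightarrow> real^'n. admissible_nodes x}"
    using adm by (intro CollectI exI[of _ ?x]) simp
  then have theta: "theta TYPE('n) = ?T"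
    unfolding theta_def using proj_norm_lower_bound by (intro cInf_eq_minimum) auto
  moreover have "regular_inscribed x"
    if "admissible_nodes x" "proj_norm x = theta TYPE('n)" for x :: "nat \<Rightarrow> real^'n"
    using minimal_proj_norm_imp_regular_inscribed[OF that(1)] that(2) theta by simp
  ultimately show ?thesis
    by blast
qed

end
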